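(* Let $f\in\mathscr{F}_r$ be normalized ($f(\emptyset)=0$) with $r$-decomposition $(V_i,f_i)_{i=1}^m$, and let $S\subseteq V$ be nonempty. Then the function $f^S:2^{V\setminus S}\to\mathbb{R}_+$ is nonnegative, monotone and supermodular. Moreover, it admits the $(r-1)$-decomposition $(V_i\setminus S,f_i^S)_{i\in I_S}$, i.e. $f^S(T)=\sum_{i\in I_S}f_i^S(T\cap(V_i\setminus S))$ for all $T\subseteq V\setminus S$ with $|V_i\setminus S|\le r-1$, where the functions $f_i^S$, $i\in I_S$, are nonnegative, monotone and supermodular.
   Context: $V$ is a finite set, $[m]=\{1,\dots,m\}$. Supermodular: $g(A)+g(B)\le g(A\cup B)+g(A\cap B)$; monotone: $g(B)\le g(A)$ for $B\subseteq A$. $\mathscr{F}_r$ is the family of nonnegative monotone supermodular $f:2^V\to\mathbb{R}_+$ admitting an $r$-decomposition $(V_i,f_i)_{i=1}^m$: subsets $V_i\subseteq V$ with $|V_i|\le r$ and nonnegative supermodular $f_i:2^{V_i}\to\mathbb{R}_+$ with $f(S)=\sum_i f_i(S\cap V_i)$ for all $S\subseteq V$. For nonempty $S\subseteq V$: $I_S=\{i\in[m]:V_i\cap S\ne\emptyset\}$; $f^S(T)=\sum_{i\in I_S}\big(f_i((S\cup T)\cap V_i)-f_i(S\cap V_i)\big)$ for $T\subseteq V\setminus S$; and for $i\in I_S$, $f_i^S:2^{V_i\setminus S}\to\mathbb{R}$, $f_i^S(T)=f_i((S\cup T)\cap V_i)-f_i(S\cap V_i)$. *)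

theory Defs
  imports Complex_Main
begin

definition nonneg_on :: "'a set \<Rightarrow> ('a set \<Rightarrow> real) \<Rightarrow> bool" where
  "nonneg_on D g \<longleftrightarrow> (\<forall>A. A \<subseteq> D \<longrightarrow> 0 \<le> g A)"

definition monotone_set_fun :: "'a set \<Rightarrow> ('a set \<Rightarrow> real) \<Rightarrow> bool" where
  "monotone_set_fun D g \<longleftrightarrow> (\<forall>A B. A \<subseteq> D \<longrightarrow> B \<subseteq> A \<longrightarrow> g B \<le> g A)"

definition supermodular_on :: "'a set \<Rightarrow> ('a set \<Rightarrow> real) \<Rightarrow> bool" where
  "supermodular_on D g \<longleftrightarrow>
     (\<forall>A B. A \<subseteq> D \<longrightarrow> B \<subseteq> D \<longrightarrow> g A + g B \<le> g (A \<union> B) + g (A \<inter> B))"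

definition decomposition_idx ::
  "'a set \<Rightarrow> ('a set \<Rightarrow> real) \<Rightarrow> nat \<Rightarrow> 'i set \<Rightarrow> ('i \<Rightarrow> 'a set) \<Rightarrow> ('i \<Rightarrow> 'a set \<Rightarrow> real) \<Rightarrow> bool"
where
  "decomposition_idx D g r I Vs fs \<longleftrightarrow>
     (\<forall>i\<in>I. Vs i \<subseteq> D \<and> card (Vs i) \<le> r \<and> nonneg_on (Vs i) (fs i) \<and> supermodular_on (Vs i) (fs i))
     \<and> (\<forall>S. S \<subseteq> D \<longrightarrow> g S = (\<Sum>i\<in>I. fs i (S \<inter> Vs i)))"

definition r_decomposition ::
  "'a set \<Rightarrow> ('a set \<Rightarrow> real) \<Rightarrow> nat \<Rightarrow> nat \<Rightarrow> (nat \<Rightarrow> 'a set) \<Rightarrow> (nat \<Rightarrow> 'a set \<Rightarrow> real) \<Rightarrow> bool"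
where
  "r_decomposition V f r m Vs fs \<longleftrightarrow> decomposition_idx V f r {1..m} Vs fs"

definition F_r :: "nat \<Rightarrow> 'a set \<Rightarrow> ('a set \<Rightarrow> real) set" where
  "F_r r V = {f. nonneg_on V f \<and> monotone_set_fun V f \<and> supermodular_on V f \<and>
                 (\<exists>m Vs fs. r_decomposition V f r m Vs fs)}"

definition I_S :: "nat \<Rightarrow> (nat \<Rightarrow> 'a set) \<Rightarrow> 'a set \<Rightarrow> nat set" where
  "I_S m Vs S = {i \<in> {1..m}. Vs i \<inter> S \<noteq> {}}"

definition f_S :: "nat \<Rightarrow> (nat \<Rightarrow> 'a set) \<Rightarrow> (nat \<Rightarrow> 'a set \<Rightarrow> real) \<Rightarrow> 'a set \<Rightarrow> 'a set \<Rightarrow> real" where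
  "f_S m Vs fs S T = (\<Sum>i\<in>I_S m Vs S. fs i ((S \<union> T) \<inter> Vs i) - fs i (S \<inter> Vs i))"

definition f_i_S :: "(nat \<Rightarrow> 'a set) \<Rightarrow> (nat \<Rightarrow> 'a set \<Rightarrow> real) \<Rightarrow> 'a set \<Rightarrow> nat \<Rightarrow> 'a set \<Rightarrow> real" where
  "f_i_S Vs fs S i T = fs i ((S \<union> T) \<inter> Vs i) - fs i (S \<inter> Vs i)"

end

theory Submission
  imports Defs
begin

text \<open>Each component f_i is nonnegative and supermodular, and normalization of f forces
  f_i(\<emptyset>) = 0, so every f_i is monotone. Contracting a monotone supermodular function by S,
  T \<mapsto> f_i((S \<union> T) \<inter> V_i) - f_i(S \<inter> V_i), keeps it nonnegative, monotone and supermodular,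
  and these properties pass to the sum f^S. A component survives in f^S only if V_i meets S,
  so its ground set V_i - S has lost at least one element.\<close>

lemma monotone_set_fun_if_supermodular_nonneg:
  assumes "nonneg_on D g" "supermodular_on D g" "g {} = 0"
  shows "monotone_set_fun D g"
  unfolding monotone_set_fun_def
proof (intro allI impI)
  fix A B assume "A \<subseteq> D" "B \<subseteq> A"
  moreover have "B \<union> (A - B) = A" "B \<inter> (A - B) = {}"
    using \<open>B \<subseteq> A\<close> by auto
  ultimately have "g B + g (A - B) \<le> g A + g {}"
    using assms(2) unfolding supermodular_on_def by (metis Diff_subset order_trans)
  moreover have "0 \<le> g (A - B)"
    using assms(1) \<open>A \<subseteq> D\<close> unfolding nonneg_on_def by blast
  ultimately show "g B \<le> g A" using assms(3) by simp
qed

lemma decomposition_idx_empty_eq_0: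
  assumes "decomposition_idx D g r I Vs fs" "finite I" "g {} = 0" "i \<in> I"
  shows "fs i {} = 0"
proof -
  have nonneg: "\<forall>j\<in>I. 0 \<le> fs j {}"
    using assms(1) unfolding decomposition_idx_def nonneg_on_def by blast
  have "g {} = (\<Sum>j\<in>I. fs j ({} \<inter> Vs j))"
    using assms(1) unfolding decomposition_idx_def by blast
  then have "(\<Sum>j\<in>I. fs j {}) = 0"
    using assms(3) by simp
  then have "\<forall>j\<in>I. fs j {} = 0"
    using sum_nonneg_eq_0_iff[OF assms(2), of "\<lambda>j. fs j {}"] nonneg by simp
  then show ?thesis
    using assms(4) by blast
qed

lemma monotone_set_fun_component:
  assumes "decomposition_idx D g r I Vs fs" "finite I" "g {} = 0" "i \<in> I"
  shows "monotone_set_fun (Vs i) (fs i)"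
  using assms decomposition_idx_empty_eq_0[OF assms]
  unfolding decomposition_idx_def by (blast intro: monotone_set_fun_if_supermodular_nonneg)

lemma card_Diff_le_pred:
  assumes "finite A" "card A \<le> r" "A \<inter> S \<noteq> {}"
  shows "card (A - S) \<le> r - 1"
proof -
  have "card (A - S) < card A"
    using assms(1,3) by (intro psubset_card_mono) auto
  then show ?thesis using assms(2) by linarith
qed

lemma nonneg_on_sum:
  assumes "\<And>i. i \<in> I \<Longrightarrow> nonneg_on D (g i)"
  shows "nonneg_on D (\<lambda>A. \<Sum>i\<in>I. g i A)"
  using assms unfolding nonneg_on_def by (auto intro: sum_nonneg)

lemma monotone_set_fun_sum:
  assumes "\<And>i. i \<in> I \<Longrightarrow> monotone_set_fun D (g i)"
  shows "monotone_set_fun D (\<lambda>A. \<Sum>i\<in>I. g i A)"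
  using assms unfolding monotone_set_fun_def by (auto intro: sum_mono)

lemma supermodular_on_sum:
  assumes "\<And>i. i \<in> I \<Longrightarrow> supermodular_on D (g i)"
  shows "supermodular_on D (\<lambda>A. \<Sum>i\<in>I. g i A)"
  using assms unfolding supermodular_on_def sum.distrib[symmetric] by (auto intro: sum_mono)

lemma nonneg_on_f_i_S:
  assumes "monotone_set_fun (Vs i) (fs i)"
  shows "nonneg_on D (f_i_S Vs fs S i)"
  unfolding nonneg_on_def f_i_S_def
proof (intro allI impI)
  fix A
  have "S \<inter> Vs i \<subseteq> (S \<union> A) \<inter> Vs i" "(S \<union> A) \<inter> Vs i \<subseteq> Vs i" by auto
  then show "0 \<le> fs i ((S \<union> A) \<inter> Vs i) - fs i (S \<inter> Vs i)"
    using assms unfolding monotone_set_fun_def by simp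
qed

lemma monotone_set_fun_f_i_S:
  assumes "monotone_set_fun (Vs i) (fs i)"
  shows "monotone_set_fun D (f_i_S Vs fs S i)"
  unfolding monotone_set_fun_def f_i_S_def
proof (intro allI impI)
  fix A B :: "'a set" assume "B \<subseteq> A"
  then have "(S \<union> B) \<inter> Vs i \<subseteq> (S \<union> A) \<inter> Vs i" "(S \<union> A) \<inter> Vs i \<subseteq> Vs i" by auto
  then show "fs i ((S \<union> B) \<inter> Vs i) - fs i (S \<inter> Vs i) \<le> fs i ((S \<union> A) \<inter> Vs i) - fs i (S \<inter> Vs i)"
    using assms unfolding monotone_set_fun_def by simp
qed

lemma supermodular_on_f_i_S:
  assumes "supermodular_on (Vs i) (fs i)"
  shows "supermodular_on D (f_i_S Vs fs S i)"
  unfolding supermodular_on_def f_i_S_def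
proof (intro allI impI)
  fix A B :: "'a set"
  have union: "(S \<union> A) \<inter> Vs i \<union> (S \<union> B) \<inter> Vs i = (S \<union> (A \<union> B)) \<inter> Vs i"
    and inter: "(S \<union> A) \<inter> Vs i \<inter> ((S \<union> B) \<inter> Vs i) = (S \<union> A \<inter> B) \<inter> Vs i"
    by auto
  have "fs i ((S \<union> A) \<inter> Vs i) + fs i ((S \<union> B) \<inter> Vs i)
      \<le> fs i ((S \<union> A) \<inter> Vs i \<union> (S \<union> B) \<inter> Vs i) + fs i ((S \<union> A) \<inter> Vs i \<inter> ((S \<union> B) \<inter> Vs i))"
    using assms[unfolded supermodular_on_def, rule_format, of "(S \<union> A) \<inter> Vs i" "(S \<union> B) \<inter> Vs i"]
    by simp
  then show "fs i ((S \<union> A) \<inter> Vs i) - fs i (S \<inter> Vs i) + (fs i ((S \<union> B) \<inter> Vs i) - fs i (S \<inter> Vs i))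
      \<le> fs i ((S \<union> (A \<union> B)) \<inter> Vs i) - fs i (S \<inter> Vs i)
        + (fs i ((S \<union> A \<inter> B) \<inter> Vs i) - fs i (S \<inter> Vs i))"
    unfolding union inter by simp
qed

lemma f_i_S_Int_Diff:
  "f_i_S Vs fs S i (T \<inter> (Vs i - S)) = f_i_S Vs fs S i T"
proof -
  have "(S \<union> T \<inter> (Vs i - S)) \<inter> Vs i = (S \<union> T) \<inter> Vs i" by auto
  then show ?thesis unfolding f_i_S_def by simp
qed

lemma f_S_eq_sum_f_i_S:
  "f_S m Vs fs S = (\<lambda>T. \<Sum>i\<in>I_S m Vs S. f_i_S Vs fs S i T)"
  unfolding f_S_def f_i_S_def by simp

theorem lemma3:
  fixes V :: "'a set" and f :: "'a set \<Rightarrow> real" and r m :: nat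
    and Vs :: "nat \<Rightarrow> 'a set" and fs :: "nat \<Rightarrow> 'a set \<Rightarrow> real" and S :: "'a set"
  assumes "finite V"
    and "f \<in> F_r r V"
    and "r_decomposition V f r m Vs fs"
    and "f {} = 0"
    and "S \<subseteq> V" and "S \<noteq> {}"
  shows "nonneg_on (V - S) (f_S m Vs fs S)
       \<and> monotone_set_fun (V - S) (f_S m Vs fs S)
       \<and> supermodular_on (V - S) (f_S m Vs fs S)
       \<and> decomposition_idx (V - S) (f_S m Vs fs S) (r - 1) (I_S m Vs S)
           (\<lambda>i. Vs i - S) (f_i_S Vs fs S)
       \<and> (\<forall>i\<in>I_S m Vs S. nonneg_on (Vs i - S) (f_i_S Vs fs S i)
            \<and> monotone_set_fun (Vs i - S) (f_i_S Vs fs S i)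
            \<and> supermodular_on (Vs i - S) (f_i_S Vs fs S i))"
proof -
  have dec: "decomposition_idx V f r {1..m} Vs fs"
    using assms(3) unfolding r_decomposition_def .
  have component: "Vs i \<subseteq> V" "card (Vs i) \<le> r" "Vs i \<inter> S \<noteq> {}"
    "monotone_set_fun (Vs i) (fs i)" "supermodular_on (Vs i) (fs i)"
    if "i \<in> I_S m Vs S" for i
    using that dec monotone_set_fun_component[OF dec _ assms(4)]
    unfolding I_S_def decomposition_idx_def by auto
  have contraction: "nonneg_on D (f_i_S Vs fs S i)" "monotone_set_fun D (f_i_S Vs fs S i)"
    "supermodular_on D (f_i_S Vs fs S i)"
    if "i \<in> I_S m Vs S" for i D
    using component(4,5)[OF that]
    by (simp_all add: nonneg_on_f_i_S monotone_set_fun_f_i_S supermodular_on_f_i_S)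
  have "card (Vs i - S) \<le> r - 1" if "i \<in> I_S m Vs S" for i
    using component[OF that] finite_subset[OF _ assms(1)] by (intro card_Diff_le_pred) auto
  then have "decomposition_idx (V - S) (f_S m Vs fs S) (r - 1) (I_S m Vs S)
      (\<lambda>i. Vs i - S) (f_i_S Vs fs S)"
    unfolding decomposition_idx_def f_S_eq_sum_f_i_S f_i_S_Int_Diff
    using component(1) contraction(1,3) by (intro conjI ballI allI impI) blast+
  moreover have "nonneg_on (V - S) (f_S m Vs fs S)"
    unfolding f_S_eq_sum_f_i_S by (rule nonneg_on_sum, rule contraction(1))
  moreover have "monotone_set_fun (V - S) (f_S m Vs fs S)"
    unfolding f_S_eq_sum_f_i_S by (rule monotone_set_fun_sum, rule contraction(2))
  moreover have "supermodular_on (V - S) (f_S m Vs fs S)"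
    unfolding f_S_eq_sum_f_i_S by (rule supermodular_on_sum, rule contraction(3))
  ultimately show ?thesis
    by (simp add: contraction)
qed

end
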